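(* Let $\beta\in\mathbb{C}$ with $|\beta|=1$ and $\beta^n\neq1$ for all $n\in\mathbb{N}$. Let $m\in\mathrm{Hol}(\mathbb{D})$, $m\not\equiv0$, and $T:\mathrm{Hol}(\mathbb{D})\to\mathrm{Hol}(\mathbb{D})$ given by $(Tf)(z)=m(z)f(\beta z)$. If there exists $z_0\in\mathbb{D}$ with $m(z_0)=0$, then $\sigma_p(T)=\emptyset$.
   Context: $\mathbb{D}$ is the open unit disc, $\mathrm{Hol}(\mathbb{D})$ the space of holomorphic functions on $\mathbb{D}$. $\sigma_p(T)$ is the set of $\lambda\in\mathbb{C}$ such that $\lambda\mathrm{Id}-T$ is not injective. *)

theory Defs
  imports "HOL-Analysis.Analysis"
begin

abbreviation disc :: "complex set" where
  "disc \<equiv> ball 0 1"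

text \<open>Hol(D): holomorphic functions on the disc. Functions are represented by
total functions normalised to 0 outside the disc, so that equality of elements
of Hol(D) is equality of functions on the disc.\<close>
definition Hol :: "(complex \<Rightarrow> complex) set" where
  "Hol = {f. f holomorphic_on disc \<and> (\<forall>z. z \<notin> disc \<longrightarrow> f z = 0)}"

definition wcomp_op :: "(complex \<Rightarrow> complex) \<Rightarrow> complex \<Rightarrow> (complex \<Rightarrow> complex) \<Rightarrow> (complex \<Rightarrow> complex)" where
  "wcomp_op m \<beta> f = (\<lambda>z. if z \<in> disc then m z * f (\<beta> * z) else 0)"

definition point_spectrum :: "((complex \<Rightarrow> complex) \<Rightarrow> (complex \<Rightarrow> complex)) \<Rightarrow> complex set" where
  "point_spectrum T = {c. \<not> inj_on (\<lambda>f. (\<lambda>z. c * f z - T f z)) Hol}"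

end

theory Submission
  imports Defs "HOL-Complex_Analysis.Complex_Analysis"
begin

text \<open>Since the operator is linear, it suffices to show that every \<open>f \<in> Hol(D)\<close> with
\<open>c f(z) = m(z) f(\<beta> z)\<close> on the disc vanishes. For \<open>c = 0\<close> this holds because the
holomorphic functions on the connected disc have no zero divisors. For \<open>c \<noteq> 0\<close> the
equation propagates zeros of \<open>f\<close> from \<open>\<beta> z\<close> to \<open>z\<close>, and \<open>f(z\<^sub>0) = 0\<close>. If \<open>z\<^sub>0 \<noteq> 0\<close>
the zeros \<open>z\<^sub>0 \<beta>\<^sup>-\<^sup>k\<close> are pairwise distinct, as \<open>\<beta>\<close> is not a root of unity, and lie on a
compact circle inside the disc, so \<open>f = 0\<close> by the identity theorem. If \<open>z\<^sub>0 = 0\<close> and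
\<open>f\<close> had a zero of finite order \<open>n\<close> at \<open>0\<close>, say \<open>f(z) = z\<^sup>n g(z)\<close> with \<open>g(0) \<noteq> 0\<close>,
then \<open>c g(z) = \<beta>\<^sup>n m(z) g(\<beta> z)\<close>, and letting \<open>z \<rightarrow> 0\<close> gives \<open>c g(0) = \<beta>\<^sup>n m(0) g(0) = 0\<close>.\<close>

lemma holomorphic_mult_eq_zero_imp_eq_zero:
  assumes "g holomorphic_on S" "h holomorphic_on S" "open S" "connected S"
    and "z \<in> S" "g z \<noteq> 0"
    and "\<And>x. x \<in> S \<Longrightarrow> g x * h x = 0"
    and "w \<in> S"
  shows "h w = 0"
proof -
  let ?U = "S \<inter> g -` (- {0})"
  have "open ?U"
    using continuous_open_preimage[OF holomorphic_on_imp_continuous_on[OF assms(1)] assms(3)]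
    by blast
  moreover have "?U \<noteq> {}"
    using assms(5,6) by blast
  moreover have "h x = 0" if "x \<in> ?U" for x
    using that assms(7)[of x] by simp
  ultimately show ?thesis
    using analytic_continuation_open[OF _ assms(3) _ assms(4) _ assms(2) holomorphic_on_const _ assms(8)]
    by blast
qed

lemma inj_power_if_not_root_of_unity:
  fixes \<beta> :: "'a::field"
  assumes "\<beta> \<noteq> 0" and "\<forall>n::nat. n \<ge> 1 \<longrightarrow> \<beta> ^ n \<noteq> 1"
  shows "inj (\<lambda>k::nat. \<beta> ^ k)"
proof (rule linorder_injI)
  fix i j :: nat
  assume "i < j"
  then have "\<beta> ^ j = \<beta> ^ i * \<beta> ^ (j - i)"
    by (simp flip: power_add)
  moreover have "\<beta> ^ (j - i) \<noteq> 1"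
    using assms(2) \<open>i < j\<close> by simp
  ultimately show "\<beta> ^ i \<noteq> \<beta> ^ j"
    using assms(1) by auto
qed

lemma rotation_in_disc_iff:
  fixes \<beta> :: complex
  assumes "norm \<beta> = 1"
  shows "\<beta> * z \<in> disc \<longleftrightarrow> z \<in> disc"
  using assms by (simp add: norm_mult)

lemma eigenfunction_eq_zero_zero_eigenvalue:
  fixes \<beta> :: complex
  assumes "norm \<beta> = 1" "m holomorphic_on disc" "z1 \<in> disc" "m z1 \<noteq> 0"
    and "f holomorphic_on disc"
    and "\<And>z. z \<in> disc \<Longrightarrow> m z * f (\<beta> * z) = 0"
    and "w \<in> disc"
  shows "f w = 0"
proof -
  have \<beta>: "\<beta> \<noteq> 0"
    using assms(1) by auto
  have "(\<lambda>z. \<beta> * z) ` disc \<subseteq> disc"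
    using rotation_in_disc_iff[OF assms(1)] by blast
  then have "(\<lambda>z. f (\<beta> * z)) holomorphic_on disc"
    using holomorphic_on_compose_gen[OF holomorphic_on_mult[OF holomorphic_on_const holomorphic_on_id] assms(5)]
    by (simp add: o_def)
  moreover have "w / \<beta> \<in> disc"
    using assms(1,7) by (simp add: norm_divide)
  ultimately have "f (\<beta> * (w / \<beta>)) = 0"
    using holomorphic_mult_eq_zero_imp_eq_zero[where h = "\<lambda>z. f (\<beta> * z)",
        OF assms(2) _ open_ball connected_ball assms(3,4,6)]
    by blast
  then show ?thesis
    using \<beta> by simp
qed

lemma eigenfunction_eq_zero_multiplier_root_off_origin:
  fixes \<beta> :: complex
  assumes "norm \<beta> = 1" and "\<forall>n::nat. n \<ge> 1 \<longrightarrow> \<beta> ^ n \<noteq> 1"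
    and "z0 \<in> disc" "m z0 = 0" "z0 \<noteq> 0"
    and "f holomorphic_on disc" "c \<noteq> 0"
    and eq: "\<And>z. z \<in> disc \<Longrightarrow> c * f z = m z * f (\<beta> * z)"
    and "w \<in> disc"
  shows "f w = 0"
proof (rule ccontr)
  assume "f w \<noteq> 0"
  have \<beta>: "\<beta> \<noteq> 0"
    using assms(1) by auto
  define orbit where "orbit k = z0 / \<beta> ^ k" for k :: nat
  have orbit_in_sphere: "orbit k \<in> sphere 0 (norm z0)" for k
    using assms(1) by (simp add: orbit_def norm_divide norm_power)
  have orbit_zero: "f (orbit k) = 0" for k
  proof (induction k)
    case 0
    then show ?case
      using eq[of z0] assms(3,4,7) by (simp add: orbit_def)
  next
    case (Suc k)
    have "\<beta> * orbit (Suc k) = orbit k"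
      using \<beta> by (simp add: orbit_def)
    then show ?case
      using eq[of "orbit (Suc k)"] orbit_in_sphere assms(3,7) Suc by simp
  qed
  have "inj orbit"
    using inj_power_if_not_root_of_unity[OF \<beta> assms(2)] assms(5)
    by (auto simp: orbit_def inj_def)
  moreover have "range orbit \<subseteq> {z \<in> sphere 0 (norm z0). f z = 0}"
    using orbit_in_sphere orbit_zero by auto
  ultimately have "infinite {z \<in> sphere 0 (norm z0). f z = 0}"
    using infinite_super range_inj_infinite by blast
  moreover have "\<not> f constant_on disc"
    using orbit_zero[of 0] \<open>f w \<noteq> 0\<close> \<open>w \<in> disc\<close> assms(3)
    unfolding constant_on_def orbit_def by (metis power_0 div_by_1)
  moreover have "sphere 0 (norm z0) \<subseteq> disc"
    using assms(3) by auto
  ultimately show False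
    using holomorphic_compact_finite_zeros[OF assms(6) open_ball connected_ball compact_sphere]
    by blast
qed

lemma eigenfunction_eq_zero_multiplier_root_at_origin:
  fixes \<beta> :: complex
  assumes "norm \<beta> = 1" and "isCont m 0" "m 0 = 0"
    and "f holomorphic_on disc" "c \<noteq> 0"
    and eq: "\<And>z. z \<in> disc \<Longrightarrow> c * f z = m z * f (\<beta> * z)"
    and "w \<in> disc"
  shows "f w = 0"
proof (rule ccontr)
  assume "f w \<noteq> 0"
  have "f 0 = 0"
    using eq[of 0] assms(3,5) by simp
  then have "\<not> f constant_on disc"
    using \<open>f w \<noteq> 0\<close> \<open>w \<in> disc\<close> unfolding constant_on_def
    by (metis centre_in_ball zero_less_one)
  then obtain g r n where "0 < r" "ball 0 r \<subseteq> disc" "g holomorphic_on ball 0 r"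
      and factor: "\<And>z. z \<in> ball 0 r \<Longrightarrow> f z = (z - 0) ^ n * g z"
      and g_nonzero: "\<And>z. z \<in> ball 0 r \<Longrightarrow> g z \<noteq> 0"
    using holomorphic_factor_zero_nonconstant[OF assms(4) open_ball connected_ball _ \<open>f 0 = 0\<close>]
    by (metis centre_in_ball zero_less_one)
  define \<phi> where "\<phi> z = c * g z - m z * \<beta> ^ n * g (\<beta> * z)" for z
  have "isCont g 0"
    using \<open>0 < r\<close>
    by (intro analytic_at_imp_isCont holomorphic_on_imp_analytic_at[OF \<open>g holomorphic_on ball 0 r\<close> open_ball])
      simp
  moreover have "isCont (\<lambda>z. g (\<beta> * z)) 0"
    using isCont_o2[where f="\<lambda>z. \<beta> * z" and a=0 and g=g] \<open>isCont g 0\<close> by simp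
  ultimately have "isCont \<phi> 0"
    unfolding \<phi>_def using assms(2) by (intro continuous_intros)
  moreover have "\<phi> z = 0" if "z \<in> ball 0 r" "z \<noteq> 0" for z
  proof -
    have "\<beta> * z \<in> ball 0 r"
      using that assms(1) by (simp add: norm_mult)
    then have "z ^ n * (c * g z) = z ^ n * (m z * \<beta> ^ n * g (\<beta> * z))"
      using eq[of z] factor[of z] factor[of "\<beta> * z"] that(1) \<open>ball 0 r \<subseteq> disc\<close>
      by (auto simp: power_mult_distrib algebra_simps)
    then show ?thesis
      using that(2) by (simp add: \<phi>_def)
  qed
  then have "eventually (\<lambda>z. \<phi> z = 0) (at 0)"
    using \<open>0 < r\<close> unfolding eventually_at by (metis dist_commute mem_ball)
  ultimately have "\<phi> 0 = 0"
    using isContD tendsto_eventually tendsto_unique at_neq_bot by metis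
  then show False
    using assms(3,5) g_nonzero \<open>0 < r\<close> by (simp add: \<phi>_def)
qed

lemma eigenfunction_eq_zero:
  fixes \<beta> :: complex
  assumes "norm \<beta> = 1" and "\<forall>n::nat. n \<ge> 1 \<longrightarrow> \<beta> ^ n \<noteq> 1"
    and "m holomorphic_on disc" "z1 \<in> disc" "m z1 \<noteq> 0" "z0 \<in> disc" "m z0 = 0"
    and "f holomorphic_on disc"
    and eq: "\<And>z. z \<in> disc \<Longrightarrow> c * f z = m z * f (\<beta> * z)"
    and "w \<in> disc"
  shows "f w = 0"
proof (cases "c = 0")
  case True
  then have "m z * f (\<beta> * z) = 0" if "z \<in> disc" for z
    using eq[OF that] by simp
  then show ?thesis
    by (rule eigenfunction_eq_zero_zero_eigenvalue[OF assms(1,3,4,5,8) _ assms(10)])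
next
  case False
  show ?thesis
  proof (cases "z0 = 0")
    case True
    have "isCont m 0"
      by (intro analytic_at_imp_isCont holomorphic_on_imp_analytic_at[OF assms(3) open_ball]) simp
    then show ?thesis
      using eigenfunction_eq_zero_multiplier_root_at_origin[OF assms(1) _ _ assms(8) False eq assms(10)]
        assms(7) True by simp
  next
    case False
    then show ?thesis
      using eigenfunction_eq_zero_multiplier_root_off_origin[OF assms(1,2,6,7) _ assms(8) \<open>c \<noteq> 0\<close> eq assms(10)]
      by simp
  qed
qed

lemma inj_on_Hol_if_no_eigenfunction:
  assumes "\<And>f. f holomorphic_on disc \<Longrightarrow> (\<And>z. z \<in> disc \<Longrightarrow> c * f z = m z * f (\<beta> * z))
      \<Longrightarrow> \<forall>w \<in> disc. f w = 0"
  shows "inj_on (\<lambda>f z. c * f z - wcomp_op m \<beta> f z) Hol"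
proof (rule inj_onI)
  fix f1 f2
  assume "f1 \<in> Hol" "f2 \<in> Hol"
    and images_eq: "(\<lambda>z. c * f1 z - wcomp_op m \<beta> f1 z) = (\<lambda>z. c * f2 z - wcomp_op m \<beta> f2 z)"
  have "(\<lambda>z. f1 z - f2 z) holomorphic_on disc"
    using \<open>f1 \<in> Hol\<close> \<open>f2 \<in> Hol\<close> by (auto simp: Hol_def intro: holomorphic_intros)
  moreover have "c * (f1 z - f2 z) = m z * (f1 (\<beta> * z) - f2 (\<beta> * z))" if "z \<in> disc" for z
    using fun_cong[OF images_eq, of z] that by (simp add: wcomp_op_def algebra_simps)
  ultimately have "\<forall>w \<in> disc. f1 w - f2 w = 0"
    by (rule assms)
  show "f1 = f2"
  proof
    fix z
    show "f1 z = f2 z"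
      using \<open>\<forall>w \<in> disc. f1 w - f2 w = 0\<close> \<open>f1 \<in> Hol\<close> \<open>f2 \<in> Hol\<close>
      by (cases "z \<in> disc") (simp_all add: Hol_def)
  qed
qed

theorem proposition3p6:
  fixes \<beta> :: complex and m :: "complex \<Rightarrow> complex"
  assumes "norm \<beta> = 1"
    and "\<forall>n::nat. n \<ge> 1 \<longrightarrow> \<beta> ^ n \<noteq> 1"
    and "m holomorphic_on disc"
    and "\<exists>z\<in>disc. m z \<noteq> 0"
    and "\<exists>z0\<in>disc. m z0 = 0"
  shows "point_spectrum (wcomp_op m \<beta>) = {}"
proof -
  obtain z1 where "z1 \<in> disc" "m z1 \<noteq> 0"
    using assms(4) by blast
  obtain z0 where "z0 \<in> disc" "m z0 = 0"
    using assms(5) by blast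
  have "inj_on (\<lambda>f z. c * f z - wcomp_op m \<beta> f z) Hol" for c
  proof (rule inj_on_Hol_if_no_eigenfunction)
    fix f
    assume "f holomorphic_on disc" and "\<And>z. z \<in> disc \<Longrightarrow> c * f z = m z * f (\<beta> * z)"
    then show "\<forall>w \<in> disc. f w = 0"
      using eigenfunction_eq_zero[OF assms(1-3) \<open>z1 \<in> disc\<close> \<open>m z1 \<noteq> 0\<close> \<open>z0 \<in> disc\<close> \<open>m z0 = 0\<close>]
      by blast
  qed
  then show ?thesis
    by (simp add: point_spectrum_def)
qed

end
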